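(* Let $\lambda_1\ge\lambda_2\ge\cdots\ge\lambda_d>0$, $k\in[d]$, and $c\in(0,1)$. Then $$\frac1k\sum_{i=k+1}^d\lambda_i\le\Big(\frac1k\sum_{i=1}^d\lambda_i^c\Big)^{1/c}.$$ *)

theory Defs
  imports Complex_Main
begin

end

theory Submission
  imports Defs
begin

(* With m = lam k, the tail terms satisfy lam i = lam i^(1-c) lam i^c <= m^(1-c) lam i^c, while
   the k head terms give k m^c <= sum lam i^c.  Writing A for the right-hand side average
   (1/k) sum lam i^c, both m^c <= A and (1/k) sum_tail lam i^c <= A, so the left-hand side is
   at most A^((1-c)/c) * A = A^(1/c). *)

lemma le_powr_one_minus_mult_powr:
  fixes x m c :: real
  assumes "0 < x" "x \<le> m" "c \<le> 1"
  shows "x \<le> m powr (1 - c) * x powr c"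
proof -
  have "x = x powr (1 - c) * x powr c"
    using \<open>0 < x\<close> by (simp add: powr_add [symmetric])
  also have "\<dots> \<le> m powr (1 - c) * x powr c"
    using assms by (intro mult_right_mono powr_mono2) auto
  finally show ?thesis .
qed

lemma sum_le_powr_one_minus_mult_sum_powr:
  fixes x :: "'a \<Rightarrow> real" and m c :: real
  assumes "\<And>i. i \<in> I \<Longrightarrow> 0 < x i" "\<And>i. i \<in> I \<Longrightarrow> x i \<le> m" "c \<le> 1"
  shows "sum x I \<le> m powr (1 - c) * (\<Sum>i\<in>I. x i powr c)"
  unfolding sum_distrib_left
  using assms by (intro sum_mono le_powr_one_minus_mult_powr) auto

lemma card_mult_powr_le_sum_powr:
  fixes x :: "'a \<Rightarrow> real" and m c :: real
  assumes "0 \<le> m" "\<And>i. i \<in> I \<Longrightarrow> m \<le> x i" "0 \<le> c"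
  shows "real (card I) * m powr c \<le> (\<Sum>i\<in>I. x i powr c)"
proof -
  have "(\<Sum>i\<in>I. m powr c) \<le> (\<Sum>i\<in>I. x i powr c)"
    using assms by (intro sum_mono powr_mono2) auto
  then show ?thesis by simp
qed

lemma powr_one_minus_mult_le_powr_inverse:
  fixes m t a c :: real
  assumes "0 < c" "c \<le> 1" "0 < m" "m powr c \<le> a" "0 \<le> t" "t \<le> a"
  shows "m powr (1 - c) * t \<le> a powr (1 / c)"
proof -
  have "0 < a" using assms(3,4) powr_gt_zero [of m c] by linarith
  have "m powr (1 - c) = (m powr c) powr ((1 - c) / c)"
    using \<open>0 < c\<close> by (simp add: powr_powr)
  also have "\<dots> \<le> a powr ((1 - c) / c)"
    using assms by (intro powr_mono2) auto
  finally have "m powr (1 - c) * t \<le> a powr ((1 - c) / c) * a"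
    using assms by (intro mult_mono) auto
  also have "\<dots> = a powr ((1 - c) / c + 1)"
    using \<open>0 < a\<close> by (simp add: powr_add)
  also have "(1 - c) / c + 1 = 1 / c"
    using \<open>0 < c\<close> by (simp add: field_simps)
  finally show ?thesis .
qed

theorem lemma4p11:
  fixes lam :: "nat \<Rightarrow> real" and d k :: nat and c :: real
  assumes mono: "\<And>i j. 1 \<le> i \<Longrightarrow> i \<le> j \<Longrightarrow> j \<le> d \<Longrightarrow> lam j \<le> lam i"
    and pos: "\<And>i. 1 \<le> i \<Longrightarrow> i \<le> d \<Longrightarrow> lam i > 0"
    and k: "1 \<le> k" "k \<le> d"
    and c: "0 < c" "c < 1"
  shows "(1 / real k) * (\<Sum>i = k+1..d. lam i)
           \<le> ((1 / real k) * (\<Sum>i = 1..d. lam i powr c)) powr (1 / c)"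
proof -
  define m where "m = lam k"
  define head where "head = (\<Sum>i = 1..k. lam i powr c)"
  define tail where "tail = (\<Sum>i = k+1..d. lam i powr c)"
  have "0 < m" using pos k by (simp add: m_def)
  have tail_bound: "(\<Sum>i = k+1..d. lam i) \<le> m powr (1 - c) * tail"
    unfolding tail_def m_def using pos mono k c
    by (intro sum_le_powr_one_minus_mult_sum_powr) auto
  have head_bound: "real k * m powr c \<le> head"
    unfolding head_def using card_mult_powr_le_sum_powr [of m "{1..k}" lam c] mono k c \<open>0 < m\<close>
    by (auto simp: m_def)
  have split: "(\<Sum>i = 1..d. lam i powr c) = head + tail"
    unfolding head_def tail_def using k sum.ub_add_nat [of 1 k _ "d - k"] by simp
  have "0 \<le> head" "0 \<le> tail" unfolding head_def tail_def by (auto intro: sum_nonneg)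
  then have "m powr c \<le> (head + tail) / k" "tail / k \<le> (head + tail) / k"
    using head_bound k by (auto simp: field_simps intro: divide_right_mono)
  then have "m powr (1 - c) * (tail / k) \<le> ((head + tail) / k) powr (1 / c)"
    using c \<open>0 < m\<close> \<open>0 \<le> tail\<close> by (intro powr_one_minus_mult_le_powr_inverse) auto
  moreover have "(1 / real k) * (\<Sum>i = k+1..d. lam i) \<le> m powr (1 - c) * (tail / k)"
    using tail_bound k by (simp add: field_simps)
  ultimately show ?thesis using split by simp
qed

end
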